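(* For every integer $n\ge 0$, $$e(n+1)=\max\{\nu(n-i)-\nu(i): i=0,1,\dots,n\},\qquad -e(n+1)=\min\{\nu(n-i)-\nu(i): i=0,1,\dots,n\}.$$
   Context: The Stern polynomials $B_n(t)\in\mathbb{Z}[t]$, $n\ge 0$, are defined by $B_0(t)=0$, $B_1(t)=1$, $B_{2n}(t)=tB_n(t)$ and $B_{2n+1}(t)=B_n(t)+B_{n+1}(t)$ for $n\ge 1$. For $n\ge 1$, $e(n)=\deg_t B_n(t)$. For $n\ge 0$, $\nu(n)$ denotes the number of digits $1$ in the binary representation of $n$. *)

theory Defs
  imports "HOL-Computational_Algebra.Polynomial"
begin

function stern_poly :: "nat \<Rightarrow> int poly" where
  "stern_poly n =
     (if n = 0 then 0
      else if n = 1 then 1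
      else if even n then [:0, 1:] * stern_poly (n div 2)
      else stern_poly (n div 2) + stern_poly (n div 2 + 1))"
  by pat_completeness auto
termination
  by (relation "measure id") (auto elim: oddE)

text \<open>e(n) = degree of B_n (meaningful for n >= 1).\<close>
definition stern_e :: "nat \<Rightarrow> nat" where
  "stern_e n = degree (stern_poly n)"

fun nu :: "nat \<Rightarrow> nat" where
  "nu n = (if n = 0 then 0 else n mod 2 + nu (n div 2))"

end

theory Submission
  imports Defs
begin

(* The degree e(n) of the Stern polynomial B_n and the difference set
     D(n) = { nu(n - i) - nu(i) | i <= n }
   obey the same binary recursion, which yields max D(n) = e(n + 1).

   1. Polynomials with nonnegative coefficients cannot cancel, so the degree
      of their sum is the maximum of the degrees.  Every B_n has nonnegative
      coefficients and B_n <> 0 for n > 0; hence e(2m) = e(m) + 1 and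
      e(2m+1) = max (e m) (e (m+1)) for m >= 1.
   2. Splitting i into even and odd values and using nu(2a) = nu(a),
      nu(2a+1) = nu(a) + 1 gives D(2m+1) = (D(m) + 1) u (D(m) - 1) and
      D(2m) = D(m) u D(m-1) for m >= 1.
   3. Strong induction on n gives Max D(n) = e(n + 1).
   4. D(n) is symmetric under negation (substitute i by n - i), so
      Min D(n) = - Max D(n). *)

declare stern_poly.simps [simp del] nu.simps [simp del]

lemma nu_0 [simp]: "nu 0 = 0"
  by (subst nu.simps) simp

lemma nu_double [simp]: "nu (2 * a) = nu a"
  by (subst nu.simps) auto

text \<open>Stated with Suc, the simplifier's normal form of 2a + 1.\<close>
lemma nu_double_plus_one [simp]: "nu (Suc (2 * a)) = nu a + 1"
  by (subst nu.simps) auto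

lemma nat_binary_cases:
  fixes n :: nat
  obtains "n = 0" | m where "n = 2 * m + 1" | m where "m \<ge> 1" "n = 2 * m"
proof (cases "even n")
  case True
  then obtain m where "n = 2 * m" by blast
  then show ?thesis using that(1) that(3)[of m] by (cases "m = 0") auto
next
  case False
  then show ?thesis using that by (auto elim: oddE)
qed

definition nonneg_poly :: "'a :: linordered_idom poly \<Rightarrow> bool" where
  "nonneg_poly p \<longleftrightarrow> (\<forall>k. 0 \<le> coeff p k)"

lemma nonneg_poly_coeff_sum_pos:
  assumes "nonneg_poly p" "nonneg_poly q" "p \<noteq> 0"
  shows "0 < coeff (p + q) (degree p)"
proof -
  have "0 < lead_coeff p"
    using assms(1,3) unfolding nonneg_poly_def by (metis leading_coeff_0_iff order_le_less)
  then show ?thesis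
    using assms(2) unfolding nonneg_poly_def by (simp add: add_pos_nonneg)
qed

lemma degree_add_nonneg_poly:
  assumes p: "nonneg_poly p" and q: "nonneg_poly q"
  shows "degree (p + q) = max (degree p) (degree q)"
proof (rule antisym)
  show "degree (p + q) \<le> max (degree p) (degree q)"
    by (rule degree_add_le_max)
  have "degree p \<le> degree (p + q)"
    using nonneg_poly_coeff_sum_pos[OF p q] by (cases "p = 0") (auto intro: le_degree)
  moreover have "degree q \<le> degree (p + q)"
    using nonneg_poly_coeff_sum_pos[OF q p] by (cases "q = 0") (auto intro: le_degree simp: add.commute)
  ultimately show "max (degree p) (degree q) \<le> degree (p + q)"
    by simp
qed

lemma nonneg_poly_add: "nonneg_poly p \<Longrightarrow> nonneg_poly q \<Longrightarrow> nonneg_poly (p + q)"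
  unfolding nonneg_poly_def by simp

lemma nonneg_poly_shift: "nonneg_poly p \<Longrightarrow> nonneg_poly ([:0, 1:] * p)"
  unfolding nonneg_poly_def by (auto simp: coeff_pCons split: nat.split)

lemma nonneg_poly_add_nonzero: "nonneg_poly p \<Longrightarrow> nonneg_poly q \<Longrightarrow> p \<noteq> 0 \<Longrightarrow> p + q \<noteq> 0"
  using nonneg_poly_coeff_sum_pos by fastforce

lemma stern_poly_0: "stern_poly 0 = 0"
  by (subst stern_poly.simps) simp

lemma stern_poly_1: "stern_poly (Suc 0) = 1"
  by (subst stern_poly.simps) simp

lemma stern_poly_double: "m \<ge> 1 \<Longrightarrow> stern_poly (2 * m) = [:0, 1:] * stern_poly m"
  by (subst stern_poly.simps) auto

lemma stern_poly_double_plus_one: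
  "m \<ge> 1 \<Longrightarrow> stern_poly (2 * m + 1) = stern_poly m + stern_poly (m + 1)"
  by (subst stern_poly.simps) auto

text \<open>Every Stern polynomial has nonnegative coefficients, and B_n is nonzero
  for n > 0; this is what makes the degree recursion exact.\<close>
lemma stern_poly_nonneg_nonzero:
  "nonneg_poly (stern_poly n) \<and> (n > 0 \<longrightarrow> stern_poly n \<noteq> 0)"
proof (induction n rule: less_induct)
  case (less n)
  show ?case
  proof (cases n rule: nat_binary_cases)
    case 1
    then show ?thesis by (simp add: nonneg_poly_def stern_poly_0)
  next
    case (3 m)
    then show ?thesis
      using less[of m] nonneg_poly_shift[of "stern_poly m"] by (simp add: stern_poly_double)
  next
    case (2 m)
    show ?thesis
    proof (cases "m = 0")
      case True
      then show ?thesis using 2 by (simp add: nonneg_poly_def stern_poly_1)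
    next
      case False
      then have "nonneg_poly (stern_poly m)" "stern_poly m \<noteq> 0" "nonneg_poly (stern_poly (m + 1))"
        using less[of m] less[of "m + 1"] 2 by auto
      moreover have "stern_poly n = stern_poly m + stern_poly (m + 1)"
        unfolding 2 using False by (intro stern_poly_double_plus_one) simp
      ultimately show ?thesis
        using 2 by (simp add: nonneg_poly_add nonneg_poly_add_nonzero)
    qed
  qed
qed

lemma stern_e_1: "stern_e 1 = 0"
  by (simp add: stern_e_def stern_poly_1)

lemma stern_e_double: "m \<ge> 1 \<Longrightarrow> stern_e (2 * m) = stern_e m + 1"
  using stern_poly_nonneg_nonzero[of m]
  by (simp add: stern_e_def stern_poly_double degree_mult_eq)

lemma stern_e_double_plus_one:
  "m \<ge> 1 \<Longrightarrow> stern_e (2 * m + 1) = max (stern_e m) (stern_e (m + 1))"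
  unfolding stern_e_def stern_poly_double_plus_one
  using degree_add_nonneg_poly stern_poly_nonneg_nonzero by blast

definition nu_diffs :: "nat \<Rightarrow> int set" where
  "nu_diffs n = {int (nu (n - i)) - int (nu i) | i. i \<le> n}"

lemma nu_diffs_finite: "finite (nu_diffs n)"
  unfolding nu_diffs_def by simp

lemma nu_diffs_nonempty: "nu_diffs n \<noteq> {}"
  unfolding nu_diffs_def by auto

lemma nu_diffs_0: "nu_diffs 0 = {0}"
  unfolding nu_diffs_def by auto

text \<open>Substituting i by n - i shows that D(n) is closed under negation.\<close>
lemma nu_diffs_uminus: "uminus ` nu_diffs n = nu_diffs n"
proof -
  have "- d \<in> nu_diffs n" if "d \<in> nu_diffs n" for d
  proof -
    from that obtain i where i: "i \<le> n" "d = int (nu (n - i)) - int (nu i)"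
      unfolding nu_diffs_def by auto
    then have "- d = int (nu (n - (n - i))) - int (nu (n - i))"
      by simp
    then show ?thesis
      unfolding nu_diffs_def by (intro CollectI exI[of _ "n - i"]) simp
  qed
  then show ?thesis
    by (auto intro: image_eqI[of _ uminus "- _"])
qed

text \<open>Odd case: an even i = 2b contributes D(m) + 1, an odd i = 2b + 1 contributes
  D(m) - 1.\<close>
lemma nu_diffs_double_plus_one:
  "nu_diffs (2 * m + 1) = (\<lambda>d. d + 1) ` nu_diffs m \<union> (\<lambda>d. d - 1) ` nu_diffs m"
proof (intro equalityI subsetI)
  fix d assume "d \<in> nu_diffs (2 * m + 1)"
  then obtain i where i: "i \<le> 2 * m + 1" "d = int (nu (2 * m + 1 - i)) - int (nu i)"
    unfolding nu_diffs_def by auto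
  show "d \<in> (\<lambda>d. d + 1) ` nu_diffs m \<union> (\<lambda>d. d - 1) ` nu_diffs m"
  proof (cases "even i")
    case True
    then obtain b where b: "i = 2 * b" by blast
    with i have "b \<le> m" "2 * m + 1 - i = 2 * (m - b) + 1" by auto
    with i b have "d - 1 \<in> nu_diffs m"
      unfolding nu_diffs_def by auto
    then show ?thesis by (auto intro: image_eqI[of _ _ "d - 1"])
  next
    case False
    then obtain b where b: "i = 2 * b + 1" using oddE by blast
    with i have "b \<le> m" "2 * m + 1 - i = 2 * (m - b)" by auto
    with i b have "d + 1 \<in> nu_diffs m"
      unfolding nu_diffs_def by auto
    then show ?thesis by (auto intro: image_eqI[of _ _ "d + 1"])
  qed
next
  fix d assume "d \<in> (\<lambda>d. d + 1) ` nu_diffs m \<union> (\<lambda>d. d - 1) ` nu_diffs m"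
  then obtain b c where b: "b \<le> m" "c = int (nu (m - b)) - int (nu b)" and "d = c + 1 \<or> d = c - 1"
    unfolding nu_diffs_def by auto
  then consider "d = int (nu (2 * m + 1 - 2 * b)) - int (nu (2 * b))"
    | "d = int (nu (2 * m + 1 - (2 * b + 1))) - int (nu (2 * b + 1))"
    using Suc_diff_le[of "2 * b" "2 * m"] by (auto simp: diff_mult_distrib2[symmetric])
  then show "d \<in> nu_diffs (2 * m + 1)"
    unfolding nu_diffs_def using b(1) by cases (fastforce+)
qed

text \<open>Even case: i = 2b contributes D(m), i = 2b + 1 contributes D(m - 1).\<close>
lemma nu_diffs_double:
  assumes "m \<ge> 1"
  shows "nu_diffs (2 * m) = nu_diffs m \<union> nu_diffs (m - 1)"
proof (intro equalityI subsetI)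
  fix d assume "d \<in> nu_diffs (2 * m)"
  then obtain i where i: "i \<le> 2 * m" "d = int (nu (2 * m - i)) - int (nu i)"
    unfolding nu_diffs_def by auto
  show "d \<in> nu_diffs m \<union> nu_diffs (m - 1)"
  proof (cases "even i")
    case True
    then obtain b where b: "i = 2 * b" by blast
    with i have "b \<le> m" "2 * m - i = 2 * (m - b)" by auto
    with i b show ?thesis
      unfolding nu_diffs_def by auto
  next
    case False
    then obtain b where b: "i = 2 * b + 1" using oddE by blast
    with i have "b \<le> m - 1" "2 * m - i = 2 * (m - 1 - b) + 1" by auto
    with i b show ?thesis
      unfolding nu_diffs_def by auto
  qed
next
  fix d assume d: "d \<in> nu_diffs m \<union> nu_diffs (m - 1)"
  show "d \<in> nu_diffs (2 * m)"
  proof (cases "d \<in> nu_diffs m")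
    case True
    then obtain b where b: "b \<le> m" "d = int (nu (m - b)) - int (nu b)"
      unfolding nu_diffs_def by auto
    then have "d = int (nu (2 * m - 2 * b)) - int (nu (2 * b))"
      by (simp add: diff_mult_distrib2[symmetric])
    then show ?thesis
      unfolding nu_diffs_def using b(1) by fastforce
  next
    case False
    with d obtain b where b: "b \<le> m - 1" "d = int (nu (m - 1 - b)) - int (nu b)"
      unfolding nu_diffs_def by auto
    moreover have "2 * m - (2 * b + 1) = 2 * (m - 1 - b) + 1"
      using b(1) assms by simp
    ultimately have "d = int (nu (2 * m - (2 * b + 1))) - int (nu (2 * b + 1))"
      by simp
    then show ?thesis
      unfolding nu_diffs_def using b(1) assms by (intro CollectI exI[of _ "2 * b + 1"]) auto
  qed
qed

lemma Max_nu_diffs: "Max (nu_diffs n) = int (stern_e (n + 1))"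
proof (induction n rule: less_induct)
  case (less n)
  note fin = nu_diffs_finite and ne = nu_diffs_nonempty
  show ?case
  proof (cases n rule: nat_binary_cases)
    case 1
    then show ?thesis using stern_e_1 by (simp add: nu_diffs_0)
  next
    case (2 m)
    have "Max (nu_diffs n) = max (Max ((\<lambda>d. d + 1) ` nu_diffs m)) (Max ((\<lambda>d. d - 1) ` nu_diffs m))"
      unfolding 2 nu_diffs_double_plus_one using fin ne by (simp add: Max_Un)
    also have "\<dots> = max (Max (nu_diffs m) + 1) (Max (nu_diffs m) - 1)"
      using fin ne by (simp add: mono_Max_commute[symmetric] mono_def)
    also have "\<dots> = int (stern_e (m + 1)) + 1"
      using less[of m] 2 by simp
    also have "\<dots> = int (stern_e (n + 1))"
      using stern_e_double[of "m + 1"] 2 by (simp add: algebra_simps)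
    finally show ?thesis .
  next
    case (3 m)
    have "Max (nu_diffs n) = max (Max (nu_diffs m)) (Max (nu_diffs (m - 1)))"
      using 3 fin ne by (simp add: nu_diffs_double Max_Un)
    also have "\<dots> = int (max (stern_e (m + 1)) (stern_e m))"
      using less[of m] less[of "m - 1"] 3 by simp
    also have "\<dots> = int (stern_e (n + 1))"
      using stern_e_double_plus_one[of m] 3 by (simp add: max.commute)
    finally show ?thesis .
  qed
qed

theorem corollary3p8:
  fixes n :: nat
  shows "int (stern_e (n + 1)) = Max {int (nu (n - i)) - int (nu i) | i. i \<le> n}
       \<and> - int (stern_e (n + 1)) = Min {int (nu (n - i)) - int (nu i) | i. i \<le> n}"
proof -
  have "- Max (nu_diffs n) = Min (uminus ` nu_diffs n)"
    using nu_diffs_finite nu_diffs_nonempty by (rule minus_Max_eq_Min)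
  then have "Min (nu_diffs n) = - Max (nu_diffs n)"
    by (simp add: nu_diffs_uminus)
  then show ?thesis
    using Max_nu_diffs[of n] unfolding nu_diffs_def by simp
qed

end
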